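(* Let $\mathcal L$ denote the Lebesgue $\sigma$-algebra on $[0,1]$ with Lebesgue measure, and let $p\in[1,\infty)$. Then for every $k\ge2$ the set $\mathscr G_{p,k}$ is dense in $L^p([0,1],\mathcal L,dx)$ for the weak topology.
   Context: $\mathscr G_{p,k}$ is the set of functions $\sum_{i=1}^l a_i\mathbf 1_{A_i}$ with $l\le k$, $\{A_i\}$ a measurable partition of $[0,1]$, $a_i\in\mathbb R$ (simple functions taking at most $k$ values). *)

theory Defs
  imports "HOL-Analysis.Analysis"
begin

definition L01 :: "real measure" where
  "L01 = restrict_space lebesgue {0..1}"

definition Lp_fun :: "real \<Rightarrow> (real \<Rightarrow> real) set" where
  "Lp_fun p = {f. f \<in> borel_measurable L01 \<and> integrable L01 (\<lambda>x. \<bar>f x\<bar> powr p)}"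

definition Lq_dual :: "real \<Rightarrow> (real \<Rightarrow> real) set" where
  "Lq_dual p = (if p = 1
     then {g. g \<in> borel_measurable L01 \<and> (\<exists>C. AE x in L01. \<bar>g x\<bar> \<le> C)}
     else Lp_fun (p / (p - 1)))"

definition G_pk :: "real \<Rightarrow> nat \<Rightarrow> (real \<Rightarrow> real) set" where
  "G_pk p k = {h. \<exists>l A a. l \<le> k \<and> (\<forall>i<l. A i \<in> sets L01)
      \<and> (\<forall>i<l. \<forall>j<l. i \<noteq> j \<longrightarrow> A i \<inter> A j = {})
      \<and> (\<Union>i<l. A i) = {0..1::real}
      \<and> h = (\<lambda>x. \<Sum>i<l. (a i :: real) * indicator (A i) x)}"

text \<open>Density of a set S in L^p for the weak topology sigma(L^p, L^q): every basic weak
  neighbourhood of every element of L^p meets S.\<close>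
definition weakly_dense_Lp :: "real \<Rightarrow> (real \<Rightarrow> real) set \<Rightarrow> bool" where
  "weakly_dense_Lp p S \<longleftrightarrow>
     (\<forall>f \<in> Lp_fun p. \<forall>F. finite F \<and> F \<subseteq> Lq_dual p \<longrightarrow> (\<forall>e>0::real.
        \<exists>h \<in> S. \<forall>g \<in> F. \<bar>(\<integral>x. h x * g x \<partial>L01) - (\<integral>x. f x * g x \<partial>L01)\<bar> < e))"

end

theory Submission
  imports Defs
begin

text \<open>Truncating f at a height M changes its pairings with finitely many test functions g
  only a little (dominated convergence; f g is integrable by Young's inequality). A function
  T with \<bar>T\<bar> \<le> M equals 2 M \<phi> - M with 0 \<le> \<phi> \<le> 1, and since Lebesgue measure is atomless,
  \<phi> can be replaced by the indicator of a set A without changing its pairings with finitely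
  many simple functions, hence approximately with finitely many integrable ones. This turns
  T into the function equal to M on A and to -M off A, which takes only two values.\<close>

lemma space_L01 [simp]: "space L01 = {0..1}"
  by (simp add: L01_def)

lemma sets_L01_iff: "A \<in> sets L01 \<longleftrightarrow> A \<subseteq> {0..1} \<and> A \<in> sets lebesgue"
  unfolding L01_def by (subst sets_restrict_space_iff) auto

lemma measure_L01: "A \<subseteq> {0..1} \<Longrightarrow> measure L01 A = measure lebesgue A"
  unfolding L01_def by (rule measure_restrict_space) auto

lemma finite_measure_L01: "finite_measure L01"
proof -
  have "emeasure L01 (space L01) = emeasure lebesgue {0..1::real}"
    unfolding L01_def by (subst emeasure_restrict_space) auto
  then show ?thesis by (intro finite_measureI) simp
qed

interpretation L01: finite_measure L01 by (rule finite_measure_L01)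

lemma integrable_indicator_L01: "A \<in> sets L01 \<Longrightarrow> integrable L01 (indicator A :: real \<Rightarrow> real)"
  by (simp add: L01.emeasure_finite less_top[symmetric])

text \<open>Lebesgue measure has no atoms: the measure of P \<inter> {..u} is a 1-Lipschitz function
  of u running from 0 to the measure of P.\<close>
lemma L01_measure_Int_atMost_eq:
  assumes P: "P \<in> sets L01" and t: "0 \<le> t" "t \<le> measure L01 P"
  shows "\<exists>u. measure L01 (P \<inter> {..u}) = t"
proof -
  define m where "m u = measure L01 (P \<inter> {..u})" for u :: real
  have P_leb: "P \<subseteq> {0..1}" "P \<in> sets lebesgue" using P sets_L01_iff by auto
  have P_u: "P \<inter> {..u} \<in> sets L01" for u using P_leb by (auto simp: sets_L01_iff)
  have m_increment: "m v - m u \<le> v - u" "m u \<le> m v" if "u \<le> v" for u v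
  proof -
    have "m v - m u = measure L01 (P \<inter> {..v} - P \<inter> {..u})"
      unfolding m_def using P_u that by (subst L01.finite_measure_Diff) auto
    also have "P \<inter> {..v} - P \<inter> {..u} = P \<inter> {u<..v}" by auto
    also have "measure L01 (P \<inter> {u<..v}) = measure lebesgue (P \<inter> {u<..v})"
      using P_leb by (intro measure_L01) auto
    also have "\<dots> \<le> measure lebesgue {u..v}"
      using P_leb by (intro measure_mono_fmeasurable) auto
    finally show "m v - m u \<le> v - u" using that by simp
    show "m u \<le> m v" unfolding m_def using P_u that by (intro L01.finite_measure_mono) auto
  qed
  have "1-lipschitz_on UNIV m"
  proof (rule lipschitz_onI)
    fix x y :: real
    show "dist (m x) (m y) \<le> 1 * dist x y"
      using m_increment[of x y] m_increment[of y x] by (cases "x \<le> y") (auto simp: dist_real_def)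
  qed simp
  then have "continuous_on {-1..1} m"
    using lipschitz_on_continuous_on continuous_on_subset by blast
  moreover have "P \<inter> {..-1} = {}" "P \<inter> {..1} = P" using P_leb by auto
  then have "m (-1) = 0" "m 1 = measure L01 P" by (simp_all add: m_def)
  ultimately obtain u where "m u = t" using IVT'[of m "-1" t 1] t by auto
  then show ?thesis unfolding m_def by auto
qed

lemma integrable_bounded_mult:
  fixes g h :: "'a \<Rightarrow> real"
  assumes g: "integrable M g" and h: "h \<in> borel_measurable M" "\<And>x. x \<in> space M \<Longrightarrow> \<bar>h x\<bar> \<le> 1"
  shows "integrable M (\<lambda>x. h x * g x)"
proof (rule Bochner_Integration.integrable_bound[OF g])
  show "(\<lambda>x. h x * g x) \<in> borel_measurable M" using h g by measurable
  show "AE x in M. norm (h x * g x) \<le> norm (g x)"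
    using h(2) by (intro AE_I2) (auto simp: abs_mult intro: mult_left_le_one_le)
qed

lemma integral_bounded_mult_diff_le:
  fixes g s h :: "'a \<Rightarrow> real"
  assumes g: "integrable M g" and s: "integrable M s"
    and h: "h \<in> borel_measurable M" "\<And>x. x \<in> space M \<Longrightarrow> \<bar>h x\<bar> \<le> 1"
  shows "\<bar>(\<integral>x. h x * g x \<partial>M) - (\<integral>x. h x * s x \<partial>M)\<bar> \<le> (\<integral>x. \<bar>g x - s x\<bar> \<partial>M)"
proof -
  have hg: "integrable M (\<lambda>x. h x * g x)" and hs: "integrable M (\<lambda>x. h x * s x)"
    using integrable_bounded_mult[OF g h] integrable_bounded_mult[OF s h] by auto
  have "(\<integral>x. h x * g x \<partial>M) - (\<integral>x. h x * s x \<partial>M) = (\<integral>x. h x * (g x - s x) \<partial>M)"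
    using hg hs by (simp add: right_diff_distrib)
  also have "\<bar>\<dots>\<bar> \<le> (\<integral>x. \<bar>h x * (g x - s x)\<bar> \<partial>M)"
    using integral_norm_bound[of M "\<lambda>x. h x * (g x - s x)"] by simp
  also have "\<dots> \<le> (\<integral>x. \<bar>g x - s x\<bar> \<partial>M)"
  proof (rule integral_mono)
    show "integrable M (\<lambda>x. \<bar>h x * (g x - s x)\<bar>)"
      using hg hs by (simp add: right_diff_distrib)
    show "\<bar>h x * (g x - s x)\<bar> \<le> \<bar>g x - s x\<bar>" if "x \<in> space M" for x
      using h(2)[OF that] by (auto simp: abs_mult intro: mult_left_le_one_le)
  qed (use g s in auto)
  finally show ?thesis .
qed

lemma integrable_simple_function_L1_approx:
  fixes g :: "'a \<Rightarrow> real"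
  assumes g: "integrable M g" and d: "0 < d"
  obtains s where "simple_function M s" "integrable M s" "(\<integral>x. \<bar>g x - s x\<bar> \<partial>M) < d"
proof -
  from g have "has_bochner_integral M g (integral\<^sup>L M g)"
    by (rule has_bochner_integral_integrable)
  then obtain s where s: "\<And>i. Bochner_Integration.simple_bochner_integrable M (s i)"
    and lim: "(\<lambda>i. \<integral>\<^sup>+x. norm (g x - s i x) \<partial>M) \<longlonglongrightarrow> 0"
    by (cases rule: has_bochner_integral.cases) auto
  have "eventually (\<lambda>i. (\<integral>\<^sup>+x. norm (g x - s i x) \<partial>M) < ennreal d) sequentially"
    using lim d by (intro order_tendstoD(2)) auto
  then obtain i where i: "(\<integral>\<^sup>+x. norm (g x - s i x) \<partial>M) < ennreal d"
    by (auto dest: eventually_happens)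
  have "simple_function M (s i)"
    using s[of i] by (cases rule: Bochner_Integration.simple_bochner_integrable.cases)
  moreover have si: "integrable M (s i)"
    using has_bochner_integral_simple_bochner_integrable[OF s[of i]] by (auto simp: integrable.simps)
  moreover have "(\<integral>\<^sup>+x. norm (g x - s i x) \<partial>M) = ennreal (\<integral>x. \<bar>g x - s i x\<bar> \<partial>M)"
    using g si by (subst nn_integral_eq_integral) auto
  with i d have "(\<integral>x. \<bar>g x - s i x\<bar> \<partial>M) < d" by (simp add: ennreal_less_iff)
  ultimately show ?thesis using that by blast
qed

lemma simple_function_family_partition:
  fixes s :: "'i \<Rightarrow> 'a \<Rightarrow> real"
  assumes F: "finite F" and s: "\<And>g. g \<in> F \<Longrightarrow> simple_function M (s g)"
  obtains V P where "finite V" "\<And>v. v \<in> V \<Longrightarrow> P v \<in> sets M" "disjoint_family_on P V"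
    "\<And>g x. g \<in> F \<Longrightarrow> x \<in> space M \<Longrightarrow> s g x = (\<Sum>v\<in>V. v g * indicator (P v) x)"
proof
  define \<Phi> where "\<Phi> x = restrict (\<lambda>g. s g x) F" for x
  define V where "V = \<Phi> ` space M"
  define P where "P v = {x \<in> space M. \<forall>g\<in>F. s g x = v g}" for v :: "'i \<Rightarrow> real"
  have "V \<subseteq> (\<Pi>\<^sub>E g\<in>F. s g ` space M)" unfolding V_def \<Phi>_def by auto
  moreover have "finite (\<Pi>\<^sub>E g\<in>F. s g ` space M)"
    using F s simple_functionD(1) by (intro finite_PiE) auto
  ultimately show "finite V" by (rule finite_subset)
  show "P v \<in> sets M" for v
    unfolding P_def
  proof (rule sets.sets_Collect_finite_All[OF _ F])
    fix g assume "g \<in> F"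
    then have "s g -` {v g} \<inter> space M \<in> sets M" using s by (simp add: simple_functionD(2))
    moreover have "s g -` {v g} \<inter> space M = {x \<in> space M. s g x = v g}" by auto
    ultimately show "{x \<in> space M. s g x = v g} \<in> sets M" by simp
  qed
  have P_iff: "x \<in> P v \<longleftrightarrow> v = \<Phi> x" if "v \<in> V" "x \<in> space M" for v x
  proof
    assume "x \<in> P v"
    moreover have "v \<in> extensional F" using \<open>v \<in> V\<close> by (auto simp: V_def \<Phi>_def)
    ultimately show "v = \<Phi> x" unfolding P_def \<Phi>_def by (intro extensionalityI[of _ F]) auto
  qed (use that in \<open>auto simp: P_def \<Phi>_def\<close>)
  show "disjoint_family_on P V"
    unfolding disjoint_family_on_def
  proof (intro ballI impI)
    fix v w assume "v \<in> V" "w \<in> V" "v \<noteq> w"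
    have "x \<in> space M" if "x \<in> P v" for x using that by (simp add: P_def)
    then show "P v \<inter> P w = {}"
      using P_iff[OF \<open>v \<in> V\<close>] P_iff[OF \<open>w \<in> V\<close>] \<open>v \<noteq> w\<close> by blast
  qed
  show "s g x = (\<Sum>v\<in>V. v g * indicator (P v) x)" if "g \<in> F" "x \<in> space M" for g x
  proof -
    have "(\<Sum>v\<in>V. v g * indicator (P v) x) = (\<Sum>v\<in>V. if v = \<Phi> x then v g else 0)"
      using P_iff that by (intro sum.cong) (auto simp: indicator_def)
    also have "\<dots> = \<Phi> x g" using \<open>finite V\<close> that by (simp add: V_def)
    finally show ?thesis using that by (simp add: \<Phi>_def)
  qed
qed

lemma L01_exists_set_measure_Int_eq:
  fixes P :: "'b \<Rightarrow> real set"
  assumes V: "finite V" and P: "\<And>v. v \<in> V \<Longrightarrow> P v \<in> sets L01" "disjoint_family_on P V"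
    and \<phi>: "\<phi> \<in> borel_measurable L01" "\<And>x. x \<in> {0..1} \<Longrightarrow> 0 \<le> \<phi> x \<and> \<phi> x \<le> 1"
  obtains A where "A \<in> sets L01"
    "\<And>v. v \<in> V \<Longrightarrow> measure L01 (A \<inter> P v) = (\<integral>x. \<phi> x * indicator (P v) x \<partial>L01)"
proof -
  have "\<exists>u. measure L01 (P v \<inter> {..u}) = (\<integral>x. \<phi> x * indicator (P v) x \<partial>L01)" if "v \<in> V" for v
  proof (rule L01_measure_Int_atMost_eq)
    have ind: "integrable L01 (indicator (P v) :: real \<Rightarrow> real)"
      using P(1)[OF that] by (rule integrable_indicator_L01)
    show "P v \<in> sets L01" using P(1)[OF that] .
    show "0 \<le> (\<integral>x. \<phi> x * indicator (P v) x \<partial>L01)"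
      using \<phi>(2) by (intro integral_nonneg_AE AE_I2) (auto simp: indicator_def)
    have "(\<integral>x. \<phi> x * indicator (P v) x \<partial>L01) \<le> (\<integral>x. indicator (P v) x \<partial>L01)"
    proof (rule integral_mono[OF integrable_bounded_mult[OF ind \<phi>(1)] ind])
      show "\<bar>\<phi> x\<bar> \<le> 1" if "x \<in> space L01" for x using \<phi>(2) that by force
      show "\<phi> x * indicator (P v) x \<le> indicator (P v) x" if "x \<in> space L01" for x
        using \<phi>(2) that by (auto simp: indicator_def)
    qed
    then show "(\<integral>x. \<phi> x * indicator (P v) x \<partial>L01) \<le> measure L01 (P v)"
      using P(1)[OF that] by (simp add: sets_L01_iff inf_absorb1)
  qed
  then obtain u where u: "\<And>v. v \<in> V \<Longrightarrow>
      measure L01 (P v \<inter> {..u v}) = (\<integral>x. \<phi> x * indicator (P v) x \<partial>L01)"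
    by metis
  define A where "A = (\<Union>v\<in>V. P v \<inter> {..u v})"
  show ?thesis
  proof
    have "P v \<inter> {..u v} \<in> sets L01" if "v \<in> V" for v
      using P(1)[OF that] by (auto simp: sets_L01_iff)
    then show "A \<in> sets L01" unfolding A_def using V by (intro sets.finite_UN) auto
    fix v assume "v \<in> V"
    moreover have "P w \<inter> P v = {}" if "w \<in> V" "w \<noteq> v" for w
      using P(2) \<open>v \<in> V\<close> that unfolding disjoint_family_on_def by blast
    ultimately have "A \<inter> P v = P v \<inter> {..u v}"
      unfolding A_def by auto
    then show "measure L01 (A \<inter> P v) = (\<integral>x. \<phi> x * indicator (P v) x \<partial>L01)"
      using u \<open>v \<in> V\<close> by simp
  qed
qed

lemma L01_exists_set_integral_eq_simple:
  fixes s :: "'i \<Rightarrow> real \<Rightarrow> real"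
  assumes F: "finite F" and s: "\<And>g. g \<in> F \<Longrightarrow> simple_function L01 (s g)"
    and \<phi>: "\<phi> \<in> borel_measurable L01" "\<And>x. x \<in> {0..1} \<Longrightarrow> 0 \<le> \<phi> x \<and> \<phi> x \<le> 1"
  obtains A where "A \<in> sets L01"
    "\<And>g. g \<in> F \<Longrightarrow> (\<integral>x. indicator A x * s g x \<partial>L01) = (\<integral>x. \<phi> x * s g x \<partial>L01)"
proof -
  obtain V P where V: "finite V" and P: "\<And>v. v \<in> V \<Longrightarrow> P v \<in> sets L01" "disjoint_family_on P V"
    and s_eq: "\<And>g x. g \<in> F \<Longrightarrow> x \<in> space L01 \<Longrightarrow> s g x = (\<Sum>v\<in>V. v g * indicator (P v) x)"
    using simple_function_family_partition[where s=s, OF F s] by blast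
  obtain A where A: "A \<in> sets L01"
    and A_mass: "\<And>v. v \<in> V \<Longrightarrow> measure L01 (A \<inter> P v) = (\<integral>x. \<phi> x * indicator (P v) x \<partial>L01)"
    using L01_exists_set_measure_Int_eq[where P=P, OF V P \<phi>] by blast
  have \<phi>_indicator_integrable: "integrable L01 (\<lambda>x. \<phi> x * indicator (P v) x)" if "v \<in> V" for v
    using \<phi> by (intro integrable_bounded_mult integrable_indicator_L01 P(1)[OF that]) force+
  show ?thesis
  proof (rule that[OF A])
    fix g assume g: "g \<in> F"
    have "(\<integral>x. indicator A x * s g x \<partial>L01)
        = (\<integral>x. (\<Sum>v\<in>V. v g * indicator (A \<inter> P v) x) \<partial>L01)"
      using s_eq[OF g] by (intro Bochner_Integration.integral_cong)
        (auto simp: sum_distrib_left indicator_inter_arith mult_ac)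
    also have "\<dots> = (\<Sum>v\<in>V. v g * measure L01 (A \<inter> P v))"
    proof -
      have "A \<inter> P v \<inter> {0..1} = A \<inter> P v" for v using A by (auto simp: sets_L01_iff)
      then show ?thesis using A P(1) integrable_indicator_L01 by (subst Bochner_Integration.integral_sum) auto
    qed
    also have "\<dots> = (\<Sum>v\<in>V. (\<integral>x. v g * (\<phi> x * indicator (P v) x) \<partial>L01))"
      using A_mass by simp
    also have "\<dots> = (\<integral>x. (\<Sum>v\<in>V. v g * (\<phi> x * indicator (P v) x)) \<partial>L01)"
      using \<phi>_indicator_integrable by (subst Bochner_Integration.integral_sum) auto
    also have "\<dots> = (\<integral>x. \<phi> x * s g x \<partial>L01)"
      using s_eq[OF g] by (intro Bochner_Integration.integral_cong)
        (auto simp: sum_distrib_left mult_ac)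
    finally show "(\<integral>x. indicator A x * s g x \<partial>L01) = (\<integral>x. \<phi> x * s g x \<partial>L01)" .
  qed
qed

text \<open>A weak form of Lyapunov's convexity theorem.\<close>
lemma L01_exists_set_integral_approx:
  fixes F :: "(real \<Rightarrow> real) set" and d :: real
  assumes F: "finite F" and g: "\<And>g. g \<in> F \<Longrightarrow> integrable L01 g"
    and \<phi>: "\<phi> \<in> borel_measurable L01" "\<And>x. x \<in> {0..1} \<Longrightarrow> 0 \<le> \<phi> x \<and> \<phi> x \<le> 1"
    and d: "0 < d"
  obtains A where "A \<in> sets L01"
    "\<And>g. g \<in> F \<Longrightarrow> \<bar>(\<integral>x. indicator A x * g x \<partial>L01) - (\<integral>x. \<phi> x * g x \<partial>L01)\<bar> < d"
proof -
  have "\<exists>s. simple_function L01 s \<and> integrable L01 s \<and> (\<integral>x. \<bar>g x - s x\<bar> \<partial>L01) < d/2"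
    if "g \<in> F" for g
    using integrable_simple_function_L1_approx[OF g[OF that], of "d/2"] d by auto
  then obtain s where s: "\<And>g. g \<in> F \<Longrightarrow> simple_function L01 (s g)"
    "\<And>g. g \<in> F \<Longrightarrow> integrable L01 (s g)"
    "\<And>g. g \<in> F \<Longrightarrow> (\<integral>x. \<bar>g x - s g x\<bar> \<partial>L01) < d/2"
    by metis
  obtain A where A: "A \<in> sets L01"
    and A_eq: "\<And>g. g \<in> F \<Longrightarrow> (\<integral>x. indicator A x * s g x \<partial>L01) = (\<integral>x. \<phi> x * s g x \<partial>L01)"
    using L01_exists_set_integral_eq_simple[where s=s, OF F s(1) \<phi>] by blast
  show ?thesis
  proof (rule that[OF A])
    fix g assume "g \<in> F"
    have "\<bar>(\<integral>x. indicator A x * g x \<partial>L01) - (\<integral>x. indicator A x * s g x \<partial>L01)\<bar>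
        \<le> (\<integral>x. \<bar>g x - s g x\<bar> \<partial>L01)"
      using A by (intro integral_bounded_mult_diff_le g s(2) \<open>g \<in> F\<close>) (auto simp: indicator_def)
    moreover have "\<bar>(\<integral>x. \<phi> x * g x \<partial>L01) - (\<integral>x. \<phi> x * s g x \<partial>L01)\<bar>
        \<le> (\<integral>x. \<bar>g x - s g x\<bar> \<partial>L01)"
      using \<phi>(2) by (intro integral_bounded_mult_diff_le g s(2) \<phi>(1) \<open>g \<in> F\<close>) force
    moreover note s(3)[OF \<open>g \<in> F\<close>]
    ultimately show "\<bar>(\<integral>x. indicator A x * g x \<partial>L01) - (\<integral>x. \<phi> x * g x \<partial>L01)\<bar> < d"
      using A_eq[OF \<open>g \<in> F\<close>] by linarith
  qed
qed

lemma abs_mult_le_Young: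
  fixes p a b :: real
  assumes "1 < p"
  shows "\<bar>a * b\<bar> \<le> \<bar>a\<bar> powr p / p + \<bar>b\<bar> powr (p / (p - 1)) / (p / (p - 1))"
proof -
  have "1 < p / (p - 1)" "1 / p + 1 / (p / (p - 1)) = 1" using assms by (simp_all add: field_simps)
  then show ?thesis using Youngs_inequality[OF assms, of "p / (p - 1)" "\<bar>a\<bar>" "\<bar>b\<bar>"]
    by (simp add: abs_mult)
qed

lemma Lp_fun_integrable:
  assumes p: "1 \<le> p" and f: "f \<in> Lp_fun p"
  shows "integrable L01 f"
proof -
  have f_meas: "f \<in> borel_measurable L01" and f_pow: "integrable L01 (\<lambda>x. \<bar>f x\<bar> powr p)"
    using f by (auto simp: Lp_fun_def)
  show ?thesis
  proof (cases "p = 1")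
    case True
    then show ?thesis using f_pow f_meas by (simp add: integrable_abs_iff)
  next
    case False
    show ?thesis
    proof (rule Bochner_Integration.integrable_bound[OF _ f_meas])
      show "integrable L01 (\<lambda>x. \<bar>f x\<bar> powr p / p + 1 / (p / (p - 1)))"
        using f_pow by auto
      show "AE x in L01. norm (f x) \<le> norm (\<bar>f x\<bar> powr p / p + 1 / (p / (p - 1)))"
        using abs_mult_le_Young[of p _ 1] False p by (intro AE_I2) simp
    qed
  qed
qed

lemma Lq_dual_integrable:
  assumes p: "1 \<le> p" and g: "g \<in> Lq_dual p"
  shows "integrable L01 g"
proof (cases "p = 1")
  case True
  then obtain C where "g \<in> borel_measurable L01" "AE x in L01. \<bar>g x\<bar> \<le> C"
    using g by (auto simp: Lq_dual_def)
  then show ?thesis by (intro L01.integrable_const_bound[where B=C]) auto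
next
  case False
  then have "g \<in> Lp_fun (p / (p - 1))" "1 \<le> p / (p - 1)"
    using g p by (simp_all add: Lq_dual_def field_simps)
  then show ?thesis using Lp_fun_integrable by blast
qed

lemma Lp_fun_Lq_dual_integrable_mult:
  assumes p: "1 \<le> p" and f: "f \<in> Lp_fun p" and g: "g \<in> Lq_dual p"
  shows "integrable L01 (\<lambda>x. f x * g x)"
proof -
  have f_meas: "f \<in> borel_measurable L01" and f_pow: "integrable L01 (\<lambda>x. \<bar>f x\<bar> powr p)"
    using f by (auto simp: Lp_fun_def)
  have fg_meas: "(\<lambda>x. f x * g x) \<in> borel_measurable L01"
    using f_meas g by (auto simp: Lq_dual_def Lp_fun_def split: if_splits)
  show ?thesis
  proof (cases "p = 1")
    case True
    then obtain C where C: "AE x in L01. \<bar>g x\<bar> \<le> C"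
      using g by (auto simp: Lq_dual_def)
    show ?thesis
    proof (rule Bochner_Integration.integrable_bound[OF _ fg_meas])
      show "integrable L01 (\<lambda>x. C * f x)" using Lp_fun_integrable[OF p f] by auto
      show "AE x in L01. norm (f x * g x) \<le> norm (C * f x)"
        using C
      proof eventually_elim
        fix x assume "\<bar>g x\<bar> \<le> C"
        then have "\<bar>f x\<bar> * \<bar>g x\<bar> \<le> \<bar>f x\<bar> * \<bar>C\<bar>" by (intro mult_left_mono) auto
        then show "norm (f x * g x) \<le> norm (C * f x)" by (simp add: abs_mult mult.commute)
      qed
    qed
  next
    case False
    then have "integrable L01 (\<lambda>x. \<bar>g x\<bar> powr (p / (p - 1)))"
      using g by (auto simp: Lq_dual_def Lp_fun_def)
    then show ?thesis
      using f_pow abs_mult_le_Young[of p] False p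
      by (intro Bochner_Integration.integrable_bound[OF _ fg_meas, of
            "\<lambda>x. \<bar>f x\<bar> powr p / p + \<bar>g x\<bar> powr (p / (p - 1)) / (p / (p - 1))"] AE_I2)
        auto
  qed
qed

lemma Lp_fun_truncation_weakly_close:
  assumes p: "1 \<le> p" and f: "f \<in> Lp_fun p"
    and F: "finite F" "F \<subseteq> Lq_dual p" and e: "0 < e"
  obtains M :: real where "1 \<le> M" "\<And>g. g \<in> F \<Longrightarrow>
    \<bar>(\<integral>x. max (- M) (min M (f x)) * g x \<partial>L01) - (\<integral>x. f x * g x \<partial>L01)\<bar> < e"
proof -
  define T where "T n x = max (- real n) (min (real n) (f x))" for n :: nat and x
  have f_meas: "f \<in> borel_measurable L01" using f by (auto simp: Lp_fun_def)
  have "(\<lambda>n. \<integral>x. T n x * g x \<partial>L01) \<longlonglongrightarrow> (\<integral>x. f x * g x \<partial>L01)" if g: "g \<in> F" for g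
  proof (rule integral_dominated_convergence[where w="\<lambda>x. \<bar>f x * g x\<bar>"])
    have g_meas: "g \<in> borel_measurable L01"
      using Lq_dual_integrable[OF p] F g by blast
    show "(\<lambda>x. f x * g x) \<in> borel_measurable L01" "(\<lambda>x. T n x * g x) \<in> borel_measurable L01" for n
      unfolding T_def using f_meas g_meas by measurable
    show "integrable L01 (\<lambda>x. \<bar>f x * g x\<bar>)"
      using Lp_fun_Lq_dual_integrable_mult[OF p f] F g by auto
    show "AE x in L01. (\<lambda>n. T n x * g x) \<longlonglongrightarrow> f x * g x"
    proof (intro AE_I2 tendsto_eventually)
      fix x
      obtain N :: nat where "\<bar>f x\<bar> \<le> real N" using real_arch_simple by blast
      then show "eventually (\<lambda>n. T n x * g x = f x * g x) sequentially"
        unfolding eventually_sequentially T_def by (intro exI[of _ N]) auto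
    qed
    show "AE x in L01. norm (T n x * g x) \<le> \<bar>f x * g x\<bar>" for n
      by (intro AE_I2) (auto simp: T_def abs_mult intro!: mult_right_mono)
  qed
  then have "\<forall>g\<in>F. eventually (\<lambda>n.
      \<bar>(\<integral>x. T n x * g x \<partial>L01) - (\<integral>x. f x * g x \<partial>L01)\<bar> < e) sequentially"
    using e tendstoD by (fastforce simp: dist_real_def)
  then have "eventually (\<lambda>n. 1 \<le> n \<and> (\<forall>g\<in>F.
      \<bar>(\<integral>x. T n x * g x \<partial>L01) - (\<integral>x. f x * g x \<partial>L01)\<bar> < e)) sequentially"
    using F(1) by (intro eventually_conj eventually_ge_at_top eventually_ball_finite) auto
  then obtain n where "1 \<le> n"
    "\<forall>g\<in>F. \<bar>(\<integral>x. T n x * g x \<partial>L01) - (\<integral>x. f x * g x \<partial>L01)\<bar> < e"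
    by (auto simp: eventually_sequentially)
  then show ?thesis using that[of "real n"] by (simp add: T_def)
qed

lemma L01_two_valued_approx:
  fixes F :: "(real \<Rightarrow> real) set"
  assumes F: "finite F" and g: "\<And>g. g \<in> F \<Longrightarrow> integrable L01 g"
    and T: "T \<in> borel_measurable L01" "\<And>x. x \<in> {0..1} \<Longrightarrow> \<bar>T x\<bar> \<le> M"
    and M: "0 < M" and e: "0 < e"
  obtains A where "A \<in> sets L01" "\<And>g. g \<in> F \<Longrightarrow>
    \<bar>(\<integral>x. (M * indicator A x + (- M) * indicator ({0..1} - A) x) * g x \<partial>L01)
      - (\<integral>x. T x * g x \<partial>L01)\<bar> < e"
proof -
  define \<phi> where "\<phi> x = (T x + M) / (2 * M)" for x
  have "\<phi> \<in> borel_measurable L01" unfolding \<phi>_def using T(1) by measurable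
  moreover have "0 \<le> \<phi> x \<and> \<phi> x \<le> 1" if "x \<in> {0..1}" for x
    using T(2)[OF that] M by (simp add: \<phi>_def field_simps abs_le_iff)
  ultimately have \<phi>: "\<phi> \<in> borel_measurable L01" "\<And>x. x \<in> {0..1} \<Longrightarrow> 0 \<le> \<phi> x \<and> \<phi> x \<le> 1"
    by blast+
  obtain A where A: "A \<in> sets L01" and A_close: "\<And>g. g \<in> F \<Longrightarrow>
      \<bar>(\<integral>x. indicator A x * g x \<partial>L01) - (\<integral>x. \<phi> x * g x \<partial>L01)\<bar> < e / (2 * M)"
    using L01_exists_set_integral_approx[OF F g \<phi>, of "e / (2 * M)"] e M by auto
  show ?thesis
  proof (rule that[OF A])
    fix g assume "g \<in> F"
    have A_int: "integrable L01 (\<lambda>x. indicator A x * g x)"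
      using A by (intro integrable_bounded_mult g \<open>g \<in> F\<close>) (auto simp: indicator_def)
    have \<phi>_int: "integrable L01 (\<lambda>x. \<phi> x * g x)"
      using \<phi> by (intro integrable_bounded_mult g \<open>g \<in> F\<close>) force+
    have "(\<integral>x. (M * indicator A x + (- M) * indicator ({0..1} - A) x) * g x \<partial>L01)
        = (\<integral>x. 2 * M * (indicator A x * g x) - M * g x \<partial>L01)"
      by (intro Bochner_Integration.integral_cong) (auto simp: indicator_def algebra_simps)
    also have "\<dots> = 2 * M * (\<integral>x. indicator A x * g x \<partial>L01) - M * (\<integral>x. g x \<partial>L01)"
      using A_int g[OF \<open>g \<in> F\<close>] by simp
    moreover have "(\<integral>x. T x * g x \<partial>L01) = (\<integral>x. 2 * M * (\<phi> x * g x) - M * g x \<partial>L01)"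
      using M by (intro Bochner_Integration.integral_cong) (auto simp: \<phi>_def field_simps)
    moreover have "\<dots> = 2 * M * (\<integral>x. \<phi> x * g x \<partial>L01) - M * (\<integral>x. g x \<partial>L01)"
      using \<phi>_int g[OF \<open>g \<in> F\<close>] by simp
    moreover have "2 * M * \<bar>(\<integral>x. indicator A x * g x \<partial>L01) - (\<integral>x. \<phi> x * g x \<partial>L01)\<bar> < e"
      using A_close[OF \<open>g \<in> F\<close>] M by (simp add: field_simps)
    ultimately show "\<bar>(\<integral>x. (M * indicator A x + (- M) * indicator ({0..1} - A) x) * g x \<partial>L01)
        - (\<integral>x. T x * g x \<partial>L01)\<bar> < e"
      using M by (simp add: abs_mult right_diff_distrib[symmetric])
  qed
qed

lemma two_valued_in_G_pk:
  assumes A: "A \<in> sets L01" and k: "2 \<le> k"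
  shows "(\<lambda>x. a * indicator A x + b * indicator ({0..1} - A) x) \<in> G_pk p k"
  unfolding G_pk_def
proof (intro CollectI exI conjI)
  define B where "B i = (if i = (0::nat) then A else {0..1} - A)" for i
  define c where "c i = (if i = (0::nat) then a else b)" for i
  have two: "{..<2::nat} = {0, 1}" by auto
  show "2 \<le> k" by (rule k)
  show "\<forall>i<2. B i \<in> sets L01" using A sets.compl_sets[OF A] by (auto simp: B_def)
  show "\<forall>i<2. \<forall>j<2. i \<noteq> j \<longrightarrow> B i \<inter> B j = {}" by (auto simp: B_def less_2_cases_iff)
  show "(\<Union>i<2. B i) = {0..1}" using A unfolding two by (auto simp: B_def sets_L01_iff)
  show "(\<lambda>x. a * indicator A x + b * indicator ({0..1} - A) x)
      = (\<lambda>x. \<Sum>i<2. c i * indicator (B i) x)"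
    by (simp only: numeral_2_eq_2 sum.lessThan_Suc lessThan_0 sum.empty) (simp add: B_def c_def)
qed

theorem proposition2p1:
  fixes p :: real and k :: nat
  assumes "1 \<le> p" and "2 \<le> k"
  shows "weakly_dense_Lp p (G_pk p k)"
  unfolding weakly_dense_Lp_def
proof (intro ballI allI impI)
  fix f F and e :: real
  assume f: "f \<in> Lp_fun p" and F: "finite F \<and> F \<subseteq> Lq_dual p" and e: "0 < e"
  obtain M :: real where M: "1 \<le> M" and trunc_close: "\<And>g. g \<in> F \<Longrightarrow>
      \<bar>(\<integral>x. max (- M) (min M (f x)) * g x \<partial>L01) - (\<integral>x. f x * g x \<partial>L01)\<bar> < e / 2"
    using Lp_fun_truncation_weakly_close[OF assms(1) f, of F "e / 2"] F e by auto
  have "f \<in> borel_measurable L01" using f by (simp add: Lp_fun_def)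
  then have "(\<lambda>x. max (- M) (min M (f x))) \<in> borel_measurable L01" by measurable
  moreover have "\<bar>max (- M) (min M (f x))\<bar> \<le> M" for x using M by auto
  moreover have "\<And>g. g \<in> F \<Longrightarrow> integrable L01 g"
    using Lq_dual_integrable[OF assms(1)] F by blast
  ultimately obtain A where A: "A \<in> sets L01" and two_valued_close: "\<And>g. g \<in> F \<Longrightarrow>
      \<bar>(\<integral>x. (M * indicator A x + (- M) * indicator ({0..1} - A) x) * g x \<partial>L01)
        - (\<integral>x. max (- M) (min M (f x)) * g x \<partial>L01)\<bar> < e / 2"
    using L01_two_valued_approx[of F "\<lambda>x. max (- M) (min M (f x))" M "e / 2"] F M e by auto
  show "\<exists>h\<in>G_pk p k. \<forall>g\<in>F. \<bar>(\<integral>x. h x * g x \<partial>L01) - (\<integral>x. f x * g x \<partial>L01)\<bar> < e"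
  proof (rule bexI[OF _ two_valued_in_G_pk[OF A assms(2), of M "- M"]], intro ballI)
    fix g assume "g \<in> F"
    then show "\<bar>(\<integral>x. (M * indicator A x + (- M) * indicator ({0..1} - A) x) * g x \<partial>L01)
        - (\<integral>x. f x * g x \<partial>L01)\<bar> < e"
      using trunc_close[OF \<open>g \<in> F\<close>] two_valued_close[OF \<open>g \<in> F\<close>] by linarith
  qed
qed

end
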